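(* Let $K\ge 2$ and positive integers $M,N,d$ with $d\le\min(M,N)$. If $d\le\min(M,N-1)$, then $(M\times N,d)^K$ is proper if and only if $((M+1)\times(N-1),d)^K$ is proper (equivalently, one is improper iff the other is). Similarly, if $d\le\min(M-1,N)$, then $(M\times N,d)^K$ is proper if and only if $((M-1)\times(N+1),d)^K$ is proper.
   Context: $(M\times N,d)^K$ is the $K$-user interference network where every transmitter has $M$ antennas, every receiver has $N$ antennas and every user demands $d$ degrees of freedom. Associate abstract variables: for each transmitter $j$ and $n\in\{1,\dots,d\}$, $M-d$ variables $x^{[j]}_{n,i}$; for each receiver $k$ and $m\in\{1,\dots,d\}$, $N-d$ variables $y^{[k]}_{m,i}$. Equations are the symbols $E^{mn}_{kj}$ for $j\ne k$, $m,n\in\{1,\dots,d\}$, with $\mathrm{var}(E^{mn}_{kj})=\{x^{[j]}_{n,i}\}_i\cup\{y^{[k]}_{m,i}\}_i$; $\mathcal E$ is the set of all equations. The system is proper if for every $S\subseteq\mathcal E$, $|S|\le\left|\bigcup_{E\in S}\mathrm{var}(E)\right|$, and improper otherwise. *)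

theory Defs
  imports Main
begin

text \<open>XV j n i : transmitter j, stream n, index i (i < M - d);
  YV k m i : receiver k, stream m, index i (i < N - d).
  Users are indexed by 1..K, streams by 1..d, variable indices by 0..<(M-d) resp. 0..<(N-d).\<close>
datatype avar = XV nat nat nat | YV nat nat nat

text \<open>Equation E^{mn}_{kj} is represented as the tuple (k, j, m, n).\<close>
type_synonym equation = "nat \<times> nat \<times> nat \<times> nat"

definition equations :: "nat \<Rightarrow> nat \<Rightarrow> equation set" where
  "equations K d = {(k, j, m, n). k \<in> {1..K} \<and> j \<in> {1..K} \<and> j \<noteq> k \<and> m \<in> {1..d} \<and> n \<in> {1..d}}"

definition var :: "nat \<Rightarrow> nat \<Rightarrow> nat \<Rightarrow> equation \<Rightarrow> avar set" where
  "var M N d E = (case E of (k, j, m, n) \<Rightarrow>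
      {XV j n i | i. i < M - d} \<union> {YV k m i | i. i < N - d})"

definition proper :: "nat \<Rightarrow> nat \<Rightarrow> nat \<Rightarrow> nat \<Rightarrow> bool" where
  "proper K M N d \<longleftrightarrow>
     (\<forall>S \<subseteq> equations K d. card S \<le> card (\<Union>E\<in>S. var M N d E))"

end

theory Submission
  imports Defs
begin

text \<open>
  Every equation (k, j, m, n) mentions only the transmitter stream (j, n) and the
  receiver stream (k, m), and the variables of an equation are exactly those of its two streams.
  Hence for a set S of equations the variables it involves are counted exactly:
  (M - d) for every transmitter stream used by S plus (N - d) for every receiver stream used by S.
  Conversely, each stream is used by at most (K - 1) d equations.  Comparing the two counts gives
  the characterisation
      proper K M N d  \<longleftrightarrow>  (K - 1) d \<le> (M - d) + (N - d)
  (sufficiency by a counting argument on an arbitrary S, necessity by taking S = all equations).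
  The right-hand side depends only on M + N, which is unchanged when one antenna is moved from the
  receivers to the transmitters or back; this yields the corollary.
\<close>

definition tx :: "equation \<Rightarrow> nat \<times> nat" where
  "tx = (\<lambda>(k, j, m, n). (j, n))"

definition rx :: "equation \<Rightarrow> nat \<times> nat" where
  "rx = (\<lambda>(k, j, m, n). (k, m))"

definition xvars :: "nat \<Rightarrow> (nat \<times> nat) set \<Rightarrow> avar set" where
  "xvars a P = (\<lambda>((j, n), i). XV j n i) ` (P \<times> {..<a})"

definition yvars :: "nat \<Rightarrow> (nat \<times> nat) set \<Rightarrow> avar set" where
  "yvars b P = (\<lambda>((k, m), i). YV k m i) ` (P \<times> {..<b})"

lemma card_xvars: "finite P \<Longrightarrow> card (xvars a P) = card P * a"
  unfolding xvars_def by (subst card_image) (auto simp: inj_on_def card_cartesian_product)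

lemma card_yvars: "finite P \<Longrightarrow> card (yvars b P) = card P * b"
  unfolding yvars_def by (subst card_image) (auto simp: inj_on_def card_cartesian_product)

lemma vars_of_equations:
  "(\<Union>E\<in>S. var M N d E) = xvars (M - d) (tx ` S) \<union> yvars (N - d) (rx ` S)"
  unfolding var_def xvars_def yvars_def tx_def rx_def by (auto split: prod.splits) force+

lemma card_vars_of_equations:
  assumes "finite S"
  shows "card (\<Union>E\<in>S. var M N d E) = card (tx ` S) * (M - d) + card (rx ` S) * (N - d)"
proof -
  have "xvars (M - d) (tx ` S) \<inter> yvars (N - d) (rx ` S) = {}"
    unfolding xvars_def yvars_def by auto
  moreover have "finite (xvars (M - d) (tx ` S))" "finite (yvars (N - d) (rx ` S))"
    unfolding xvars_def yvars_def using assms by simp_all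
  ultimately show ?thesis
    unfolding vars_of_equations using assms
    by (simp add: card_Un_disjoint card_xvars card_yvars)
qed

lemma finite_equations: "finite (equations K d)"
proof -
  have "equations K d \<subseteq> {1..K} \<times> {1..K} \<times> {1..d} \<times> {1..d}"
    unfolding equations_def by auto
  then show ?thesis by (rule finite_subset) auto
qed

lemma card_le_fibre_bound:
  assumes "finite S" and "\<And>y. y \<in> f ` S \<Longrightarrow> card {x \<in> S. f x = y} \<le> c"
  shows "card S \<le> c * card (f ` S)"
proof -
  have "card S \<le> card (\<Union>y\<in>f ` S. {x \<in> S. f x = y})"
    by (rule card_mono) (use assms(1) in auto)
  also have "\<dots> \<le> (\<Sum>y\<in>f ` S. card {x \<in> S. f x = y})"
    by (rule card_UN_le) (use assms(1) in simp)
  also have "\<dots> \<le> (\<Sum>y\<in>f ` S. c)"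
    by (rule sum_mono) (rule assms(2))
  finally show ?thesis by (simp add: mult.commute)
qed

text \<open>A transmitter stream (j, n) meets every other receiver stream exactly once.\<close>
lemma card_tx_fibre:
  assumes "S \<subseteq> equations K d" and "p \<in> tx ` S"
  shows "card {E \<in> S. tx E = p} \<le> (K - 1) * d"
proof -
  obtain j n where p: "p = (j, n)" by (cases p)
  have j: "j \<in> {1..K}" using assms unfolding p tx_def equations_def by auto
  have "{E \<in> S. tx E = p} \<subseteq> (\<lambda>(k, m). (k, j, m, n)) ` (({1..K} - {j}) \<times> {1..d})"
    using assms(1) unfolding p tx_def equations_def by (force simp: image_iff)
  then have "card {E \<in> S. tx E = p} \<le> card (({1..K} - {j}) \<times> {1..d})"
    by (rule surj_card_le[rotated]) simp
  also have "\<dots> = (K - 1) * d" using j by (simp add: card_cartesian_product)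
  finally show ?thesis .
qed

lemma card_rx_fibre:
  assumes "S \<subseteq> equations K d" and "p \<in> rx ` S"
  shows "card {E \<in> S. rx E = p} \<le> (K - 1) * d"
proof -
  obtain k m where p: "p = (k, m)" by (cases p)
  have k: "k \<in> {1..K}" using assms unfolding p rx_def equations_def by auto
  have "{E \<in> S. rx E = p} \<subseteq> (\<lambda>(j, n). (k, j, m, n)) ` (({1..K} - {k}) \<times> {1..d})"
    using assms(1) unfolding p rx_def equations_def by (force simp: image_iff)
  then have "card {E \<in> S. rx E = p} \<le> card (({1..K} - {k}) \<times> {1..d})"
    by (rule surj_card_le[rotated]) simp
  also have "\<dots> = (K - 1) * d" using k by (simp add: card_cartesian_product)
  finally show ?thesis .
qed

lemma equations_card_le_vars:
  assumes S: "S \<subseteq> equations K d" and bound: "(K - 1) * d \<le> (M - d) + (N - d)"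
  shows "card S \<le> card (\<Union>E\<in>S. var M N d E)"
proof -
  have fin: "finite S" using S finite_equations finite_subset by blast
  define t where "t = card (tx ` S)"
  define r where "r = card (rx ` S)"
  have "card S \<le> (K - 1) * d * t" "card S \<le> (K - 1) * d * r"
    unfolding t_def r_def using fin
    by (blast intro: card_le_fibre_bound card_tx_fibre[OF S] card_rx_fibre[OF S])+
  then have "card S \<le> min t r * ((M - d) + (N - d))"
    using bound by (metis min_def mult.commute mult_le_mono2 order_trans)
  also have "\<dots> \<le> t * (M - d) + r * (N - d)"
    by (cases "t \<le> r") (simp_all add: min_def add_mult_distrib2 mult_le_mono1)
  finally show ?thesis unfolding card_vars_of_equations[OF fin] t_def r_def .
qed

text \<open>Necessity: the full system has K (K - 1) d^2 equations but at most K d (a + b) variables.\<close>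
lemma proper_imp_bound:
  assumes K: "K \<ge> 1" and d: "d \<ge> 1" and p: "proper K M N d"
  shows "(K - 1) * d \<le> (M - d) + (N - d)"
proof -
  let ?E = "equations K d"
  have "?E = (SIGMA k:{1..K}. ({1..K} - {k}) \<times> ({1..d} \<times> {1..d}))"
    unfolding equations_def by auto
  then have card_E: "card ?E = K * ((K - 1) * (d * d))"
    by (simp add: card_cartesian_product)
  have streams: "tx ` ?E \<subseteq> {1..K} \<times> {1..d}" "rx ` ?E \<subseteq> {1..K} \<times> {1..d}"
    unfolding tx_def rx_def equations_def by auto
  have "card (tx ` ?E) \<le> K * d" "card (rx ` ?E) \<le> K * d"
    using card_mono[OF _ streams(1)] card_mono[OF _ streams(2)]
    by (simp_all add: card_cartesian_product)
  then have "card (\<Union>E\<in>?E. var M N d E) \<le> (K * d) * ((M - d) + (N - d))"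
    unfolding card_vars_of_equations[OF finite_equations]
    by (simp add: add_mult_distrib2 add_mono)
  moreover have "card ?E \<le> card (\<Union>E\<in>?E. var M N d E)"
    using p unfolding proper_def by blast
  ultimately have "(K * d) * ((K - 1) * d) \<le> (K * d) * ((M - d) + (N - d))"
    using card_E by (simp add: algebra_simps)
  then show ?thesis using K d by simp
qed

theorem proper_iff:
  assumes "K \<ge> 1" and "d \<ge> 1"
  shows "proper K M N d \<longleftrightarrow> (K - 1) * d \<le> (M - d) + (N - d)"
  using proper_imp_bound[OF assms] equations_card_le_vars unfolding proper_def by blast

text \<open>The condition of proper_iff only involves M + N as long as d \<le> min M N on both sides.\<close>
theorem corollary2:
  fixes K M N d :: nat
  assumes "K \<ge> 2" and "0 < M" and "0 < N" and "0 < d" and "d \<le> min M N"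
  shows "(d \<le> min M (N - 1) \<longrightarrow> (proper K M N d \<longleftrightarrow> proper K (M + 1) (N - 1) d))
       \<and> (d \<le> min (M - 1) N \<longrightarrow> (proper K M N d \<longleftrightarrow> proper K (M - 1) (N + 1) d))"
proof -
  have K: "K \<ge> 1" and d: "d \<ge> 1" using assms by auto
  show ?thesis
    unfolding proper_iff[OF K d] using assms by auto
qed

end
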